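(* Suppose $p_{\max}\cdot d_{\max}<1$. Then there exist constants $R,\rho>0$ (depending only on $p_{\max}$ and $d_{\max}$) such that for any $L>0$, for every round $t$ of the adaptive seeding process (under any seeding rule and any prior history), the probability that the number of nodes newly activated in round $t$ exceeds $L$ is at most $Re^{-\rho L}$.
   Context: Setting: adaptive seeding on a finite directed graph $\mathcal G=(\mathcal V,\mathcal E)$ with influence probabilities $\bar w(e)$, one seed per round, each round's diffusion following the independent cascade model on the current graph (where arcs into nodes that have acted as non-seed activated nodes, i.e. intermediaries, in earlier rounds have been removed; independent-cascade coin flips are independent across arcs and rounds). $p_{\max}=\max_{e\in\mathcal E}\bar w(e)$ and $d_{\max}$ is the maximum out-degree of a node in $\mathcal G$. A node is newly activated in round $t$ if it is activated in round $t$ and was not activated in any earlier round. *)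

theory Defs
  imports "HOL-Probability.Probability"
begin

text \<open>A history of the adaptive seeding process is the list of completed rounds,
  each recorded as (seed of the round, set of nodes activated in that round).\<close>

type_synonym 'a history = "('a \<times> 'a set) list"

definition p_max :: "('a \<times> 'a) set \<Rightarrow> ('a \<times> 'a \<Rightarrow> real) \<Rightarrow> real" where
  "p_max E w = Max (insert 0 (w ` E))"

definition d_max :: "'a set \<Rightarrow> ('a \<times> 'a) set \<Rightarrow> nat" where
  "d_max V E = Max (insert 0 ((\<lambda>u. card {v. (u, v) \<in> E}) ` V))"

definition intermediaries :: "'a history \<Rightarrow> 'a set" where
  "intermediaries h = (\<Union>(s, A)\<in>set h. A - {s})"

definition previously_activated :: "'a history \<Rightarrow> 'a set" where
  "previously_activated h = (\<Union>(s, A)\<in>set h. A)"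

definition current_arcs :: "('a \<times> 'a) set \<Rightarrow> 'a history \<Rightarrow> ('a \<times> 'a) set" where
  "current_arcs E h = {(u, v) \<in> E. v \<notin> intermediaries h}"

definition coin_flips ::
  "('a \<times> 'a) set \<Rightarrow> ('a \<times> 'a \<Rightarrow> real) \<Rightarrow> 'a history \<Rightarrow> ('a \<times> 'a \<Rightarrow> bool) pmf" where
  "coin_flips E w h = Pi_pmf (current_arcs E h) False (\<lambda>e. bernoulli_pmf (w e))"

definition ic_activated :: "('a \<times> 'a) set \<Rightarrow> ('a \<times> 'a \<Rightarrow> bool) \<Rightarrow> 'a \<Rightarrow> 'a set" where
  "ic_activated F X s = {v. (s, v) \<in> {e \<in> F. X e}\<^sup>*}"

definition round_activated ::
  "('a \<times> 'a) set \<Rightarrow> ('a \<times> 'a \<Rightarrow> real) \<Rightarrow> 'a history \<Rightarrow> 'a \<Rightarrow> 'a set pmf" where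
  "round_activated E w h s =
     map_pmf (\<lambda>X. ic_activated (current_arcs E h) X s) (coin_flips E w h)"

definition newly_activated_count ::
  "('a \<times> 'a) set \<Rightarrow> ('a \<times> 'a \<Rightarrow> real) \<Rightarrow> ('a history \<Rightarrow> 'a pmf) \<Rightarrow> 'a history \<Rightarrow> nat pmf" where
  "newly_activated_count E w \<sigma> h =
     bind_pmf (\<sigma> h) (\<lambda>s. map_pmf (\<lambda>A. card (A - previously_activated h)) (round_activated E w h s))"

end

theory Submission imports Defs begin

text \<open>The number of nodes activated in one round is at most the size of the set reached from the
  seed along live arcs. Its exponential moment \<open>E z^|reach(S)|\<close> is at most \<open>c^|S|\<close> whenever
  \<open>z (1 + q (c - 1))^d \<le> c\<close>: removing one source \<open>s\<close> costs a factor \<open>z\<close>, the live out-arcs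
  of \<open>s\<close> are independent of the remaining arcs and add on average a factor
  \<open>(1 + q (c - 1))^d\<close> to the bound, and the rest is the same problem on a graph with fewer
  arcs (or fewer sources). If \<open>p d < 1\<close>, such \<open>z > 1\<close> and \<open>c \<ge> 1\<close> exist, and Markov's
  inequality for \<open>z^|reach|\<close> gives the exponential tail \<open>c z^-L\<close>.\<close>

abbreviation arc_coins :: "('a \<times> 'a) set \<Rightarrow> ('a \<times> 'a \<Rightarrow> real) \<Rightarrow> ('a \<times> 'a \<Rightarrow> bool) pmf" where
  "arc_coins F w \<equiv> Pi_pmf F False (\<lambda>e. bernoulli_pmf (w e))"

definition live_arcs :: "('a \<times> 'a) set \<Rightarrow> ('a \<times> 'a \<Rightarrow> bool) \<Rightarrow> ('a \<times> 'a) set" where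
  "live_arcs F X = {e \<in> F. X e}"

definition out_arcs :: "('a \<times> 'a) set \<Rightarrow> 'a \<Rightarrow> ('a \<times> 'a) set" where
  "out_arcs F u = {e \<in> F. fst e = u}"

lemma card_out_arcs: "card (out_arcs F u) = card {v. (u, v) \<in> F}"
proof -
  have "out_arcs F u = Pair u ` {v. (u, v) \<in> F}" by (force simp: out_arcs_def)
  then show ?thesis by (simp add: card_image inj_on_def)
qed

lemma card_out_arcs_mono:
  assumes "finite F" "G \<subseteq> F"
  shows "card (out_arcs G u) \<le> card (out_arcs F u)"
  using assms by (intro card_mono) (auto simp: out_arcs_def)

lemma rtrancl_Image_remove_source:
  assumes "s \<in> S"
  shows "R\<^sup>* `` S \<subseteq> insert s ({(u, v) \<in> R. u \<noteq> s}\<^sup>* `` (S - {s} \<union> R `` {s}))"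
    (is "_ \<subseteq> insert s (?R'\<^sup>* `` ?S')")
proof
  fix v assume "v \<in> R\<^sup>* `` S"
  then obtain x where "x \<in> S" "(x, v) \<in> R\<^sup>*" by blast
  from this(2) show "v \<in> insert s (?R'\<^sup>* `` ?S')"
  proof (induction rule: rtrancl_induct)
    case base
    then show ?case using \<open>x \<in> S\<close> by blast
  next
    case (step y v)
    show ?case
    proof (cases "y = s")
      case True
      then show ?thesis using step.hyps(2) by blast
    next
      case False
      with step.IH obtain x' where "x' \<in> ?S'" "(x', y) \<in> ?R'\<^sup>*" by blast
      moreover have "(y, v) \<in> ?R'" using step.hyps(2) False by blast
      ultimately show ?thesis by (meson ImageI rtrancl.rtrancl_into_rtrancl insertI2)
    qed
  qed
qed

lemma card_live_reach_remove_source: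
  assumes "finite F" "finite S" "s \<in> S"
  shows "card ((live_arcs F X)\<^sup>* `` S)
    \<le> Suc (card ((live_arcs (F - out_arcs F s) X)\<^sup>* `` (S - {s} \<union> live_arcs F X `` {s})))"
    (is "_ \<le> Suc (card ?T)")
proof -
  have "{(u, v) \<in> live_arcs F X. u \<noteq> s} = live_arcs (F - out_arcs F s) X"
    by (auto simp: live_arcs_def out_arcs_def)
  then have "(live_arcs F X)\<^sup>* `` S \<subseteq> insert s ?T"
    using rtrancl_Image_remove_source[OF assms(3), of "live_arcs F X"] by simp
  moreover have "finite ?T" using assms by (simp add: live_arcs_def)
  ultimately have "card ((live_arcs F X)\<^sup>* `` S) \<le> card (insert s ?T)"
    by (intro card_mono) auto
  also have "\<dots> \<le> Suc (card ?T)" using \<open>finite ?T\<close> by (simp add: card_insert_if)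
  finally show ?thesis .
qed

lemma nn_integral_bernoulli_if:
  assumes "0 \<le> a" "a \<le> 1" "0 \<le> c"
  shows "(\<integral>\<^sup>+b. ennreal (if b then c else 1) \<partial>bernoulli_pmf a) = ennreal (1 + a * (c - 1))"
proof -
  have "(\<integral>\<^sup>+b. ennreal (if b then c else 1) \<partial>bernoulli_pmf a)
      = (\<Sum>b\<in>UNIV. ennreal (if b then c else 1) * pmf (bernoulli_pmf a) b)"
    by (rule nn_integral_measure_pmf_support) auto
  also have "\<dots> = ennreal (c * a + (1 - a))"
    using assms by (simp add: UNIV_bool ennreal_mult[symmetric] ennreal_plus[symmetric] del: ennreal_plus)
  finally show ?thesis by (simp add: algebra_simps)
qed

lemma nn_integral_power_card_true_le:
  fixes c q :: real
  assumes "finite A" "c \<ge> 1" "q \<ge> 0" "\<forall>e\<in>A. 0 \<le> w e \<and> w e \<le> 1 \<and> w e \<le> q" "card A \<le> d"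
  shows "(\<integral>\<^sup>+X. ennreal (c ^ card {e \<in> A. X e}) \<partial>arc_coins A w) \<le> ennreal ((1 + q * (c - 1)) ^ d)"
proof -
  have "c ^ card {e \<in> A. X e} = (\<Prod>e\<in>A. if X e then c else 1)" for X
    using prod.If_cases[OF assms(1), of X "\<lambda>_. c" "\<lambda>_. 1"] by (simp add: Collect_conj_eq Int_commute)
  then have "(\<integral>\<^sup>+X. ennreal (c ^ card {e \<in> A. X e}) \<partial>arc_coins A w)
      = (\<integral>\<^sup>+X. (\<Prod>e\<in>A. ennreal (if X e then c else 1)) \<partial>arc_coins A w)"
    using assms(2) by (simp add: prod_ennreal)
  also have "\<dots> = (\<Prod>e\<in>A. \<integral>\<^sup>+b. ennreal (if b then c else 1) \<partial>bernoulli_pmf (w e))"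
    using assms(1) by (rule nn_integral_prod_Pi_pmf)
  also have "\<dots> = (\<Prod>e\<in>A. ennreal (1 + w e * (c - 1)))"
    using assms by (intro prod.cong refl nn_integral_bernoulli_if) auto
  also have "\<dots> = ennreal (\<Prod>e\<in>A. 1 + w e * (c - 1))"
    using assms by (intro prod_ennreal) auto
  also have "(\<Prod>e\<in>A. 1 + w e * (c - 1)) \<le> (1 + q * (c - 1)) ^ card A"
    using assms prod_mono[of A "\<lambda>e. 1 + w e * (c - 1)" "\<lambda>_. 1 + q * (c - 1)"]
    by (simp add: mult_right_mono)
  also have "\<dots> \<le> (1 + q * (c - 1)) ^ d"
    using assms by (intro power_increasing) auto
  finally show ?thesis by (simp add: ennreal_leI)
qed

lemma arc_coins_split:
  assumes "finite F" "A \<subseteq> F"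
  shows "arc_coins F w =
    map_pmf (\<lambda>(f, g) x. if x \<in> A then f x else g x) (pair_pmf (arc_coins A w) (arc_coins (F - A) w))"
proof -
  have "F = A \<union> (F - A)" using assms(2) by blast
  then show ?thesis
    using Pi_pmf_union[of A "F - A" False "\<lambda>e. bernoulli_pmf (w e)"] assms finite_subset by force
qed

lemma reach_moment_remove_source:
  fixes q z c :: real
  assumes c1: "c \<ge> 1" and z1: "z \<ge> 1" and q0: "q \<ge> 0" and key: "z * (1 + q * (c - 1)) ^ d \<le> c"
    and F: "finite F" and w: "\<forall>e\<in>out_arcs F s. 0 \<le> w e \<and> w e \<le> 1 \<and> w e \<le> q"
    and deg: "card (out_arcs F s) \<le> d" and S: "finite S" "s \<in> S"
    and IH: "\<And>f. (\<integral>\<^sup>+Y. ennreal (z ^ card ((live_arcs (F - out_arcs F s) Y)\<^sup>* ``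
                    (S - {s} \<union> live_arcs (out_arcs F s) f `` {s}))) \<partial>arc_coins (F - out_arcs F s) w)
               \<le> ennreal (c ^ card (S - {s} \<union> live_arcs (out_arcs F s) f `` {s}))"
  shows "(\<integral>\<^sup>+X. ennreal (z ^ card ((live_arcs F X)\<^sup>* `` S)) \<partial>arc_coins F w) \<le> ennreal (c ^ card S)"
proof -
  define A where "A = out_arcs F s"
  define B where "B = F - A"
  define T where "T f = S - {s} \<union> live_arcs A f `` {s}" for f
  define merge where "merge = (\<lambda>(f, g) x. if x \<in> A then f x else (g x :: bool))"
  have A: "finite A" "A \<subseteq> F" using F by (auto simp: A_def out_arcs_def)
  have card_T: "card (T f) \<le> (card S - 1) + card {e \<in> A. f e}" for f
  proof -
    have "live_arcs A f `` {s} = snd ` {e \<in> A. f e}"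
      by (force simp: live_arcs_def A_def out_arcs_def)
    then have "card (live_arcs A f `` {s}) \<le> card {e \<in> A. f e}"
      by (simp add: card_image_le A)
    then show ?thesis
      using card_Un_le[of "S - {s}" "live_arcs A f `` {s}"] S by (simp add: T_def)
  qed
  have merge_pointwise: "z ^ card ((live_arcs F (merge (f, g)))\<^sup>* `` S) \<le> z * z ^ card ((live_arcs B g)\<^sup>* `` T f)"
    for f g
  proof -
    have "live_arcs F (merge (f, g)) `` {s} = live_arcs A f `` {s}"
      by (auto simp: live_arcs_def merge_def A_def out_arcs_def)
    moreover have "live_arcs B (merge (f, g)) = live_arcs B g"
      by (auto simp: live_arcs_def merge_def B_def)
    ultimately have "card ((live_arcs F (merge (f, g)))\<^sup>* `` S) \<le> Suc (card ((live_arcs B g)\<^sup>* `` T f))"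
      using card_live_reach_remove_source[OF F S, of "merge (f, g)"] by (simp add: T_def A_def B_def)
    then show ?thesis using z1 power_increasing[of _ _ z] by fastforce
  qed
  have "(\<integral>\<^sup>+X. ennreal (z ^ card ((live_arcs F X)\<^sup>* `` S)) \<partial>arc_coins F w)
      = (\<integral>\<^sup>+f. \<integral>\<^sup>+g. ennreal (z ^ card ((live_arcs F (merge (f, g)))\<^sup>* `` S))
            \<partial>arc_coins B w \<partial>arc_coins A w)"
    by (simp add: arc_coins_split[OF F A(2)] nn_integral_pair_pmf' merge_def B_def)
  also have "\<dots> \<le> (\<integral>\<^sup>+f. ennreal z * \<integral>\<^sup>+g. ennreal (z ^ card ((live_arcs B g)\<^sup>* `` T f))
            \<partial>arc_coins B w \<partial>arc_coins A w)"
    using z1 merge_pointwise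
    by (intro nn_integral_mono) (simp add: nn_integral_cmult[symmetric] ennreal_mult[symmetric] nn_integral_mono)
  also have "\<dots> \<le> (\<integral>\<^sup>+f. ennreal (z * c ^ card (T f)) \<partial>arc_coins A w)"
  proof (intro nn_integral_mono)
    fix f
    have "(\<integral>\<^sup>+g. ennreal (z ^ card ((live_arcs B g)\<^sup>* `` T f)) \<partial>arc_coins B w) \<le> ennreal (c ^ card (T f))"
      using IH[of f] by (simp add: T_def A_def B_def)
    then show "ennreal z * (\<integral>\<^sup>+g. ennreal (z ^ card ((live_arcs B g)\<^sup>* `` T f)) \<partial>arc_coins B w)
        \<le> ennreal (z * c ^ card (T f))"
      using z1 c1 by (subst ennreal_mult) (auto intro: mult_left_mono)
  qed
  also have "\<dots> \<le> (\<integral>\<^sup>+f. ennreal (z * c ^ (card S - 1)) * ennreal (c ^ card {e \<in> A. f e}) \<partial>arc_coins A w)"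
  proof (intro nn_integral_mono)
    fix f
    have "c ^ card (T f) \<le> c ^ (card S - 1) * c ^ card {e \<in> A. f e}"
      using c1 card_T[of f] power_increasing[of _ _ c] by (simp add: power_add[symmetric])
    then show "ennreal (z * c ^ card (T f)) \<le> ennreal (z * c ^ (card S - 1)) * ennreal (c ^ card {e \<in> A. f e})"
      using z1 c1 by (simp add: ennreal_mult[symmetric] ennreal_leI mult.assoc)
  qed
  also have "\<dots> = ennreal (z * c ^ (card S - 1)) * (\<integral>\<^sup>+f. ennreal (c ^ card {e \<in> A. f e}) \<partial>arc_coins A w)"
    by (rule nn_integral_cmult) auto
  also have "\<dots> \<le> ennreal (z * c ^ (card S - 1)) * ennreal ((1 + q * (c - 1)) ^ d)"
    using w deg by (intro mult_left_mono nn_integral_power_card_true_le[OF A(1) c1 q0]) (auto simp: A_def)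
  also have "\<dots> = ennreal (z * (1 + q * (c - 1)) ^ d * c ^ (card S - 1))"
    using z1 c1 q0 by (simp add: ennreal_mult[symmetric] mult_ac)
  also have "\<dots> \<le> ennreal (c * c ^ (card S - 1))"
    using key c1 by (intro ennreal_leI mult_right_mono) auto
  also have "c * c ^ (card S - 1) = c ^ card S"
    using S by (metis card_gt_0_iff emptyE power_eq_if neq0_conv)
  finally show ?thesis .
qed

lemma reach_moment_bound:
  fixes q z c :: real
  assumes c1: "c \<ge> 1" and z1: "z \<ge> 1" and q0: "q \<ge> 0" and key: "z * (1 + q * (c - 1)) ^ d \<le> c"
    and "finite F" "\<forall>e\<in>F. 0 \<le> w e \<and> w e \<le> 1 \<and> w e \<le> q" "\<forall>u. card (out_arcs F u) \<le> d"
    and "finite S"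
  shows "(\<integral>\<^sup>+X. ennreal (z ^ card ((live_arcs F X)\<^sup>* `` S)) \<partial>arc_coins F w) \<le> ennreal (c ^ card S)"
  using assms(5-)
proof (induction "card F" arbitrary: F S rule: less_induct)
  case (less F)
  note fewer_arcs = less.hyps and F = less.prems(1-3)
  from \<open>finite S\<close> show ?case
  proof (induction "card S" arbitrary: S rule: less_induct)
    case (less S)
    show ?case
    proof (cases "S = {}")
      case False
      then obtain s where s: "s \<in> S" by blast
      show ?thesis
      proof (rule reach_moment_remove_source[OF c1 z1 q0 key F(1) _ _ \<open>finite S\<close> s])
        show "\<forall>e\<in>out_arcs F s. 0 \<le> w e \<and> w e \<le> 1 \<and> w e \<le> q" "card (out_arcs F s) \<le> d"
          using F by (auto simp: out_arcs_def)
        fix f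
        let ?T = "S - {s} \<union> live_arcs (out_arcs F s) f `` {s}"
        have "finite ?T" using \<open>finite S\<close> F(1) by (simp add: live_arcs_def out_arcs_def)
        show "(\<integral>\<^sup>+Y. ennreal (z ^ card ((live_arcs (F - out_arcs F s) Y)\<^sup>* `` ?T))
            \<partial>arc_coins (F - out_arcs F s) w) \<le> ennreal (c ^ card ?T)"
        proof (cases "out_arcs F s = {}")
          case True
          then have "?T = S - {s}" by (simp add: live_arcs_def)
          moreover have "card (S - {s}) < card S" using \<open>finite S\<close> s by (rule card_Diff1_less)
          ultimately show ?thesis using less.hyps \<open>finite S\<close> True by simp
        next
          case False
          then have "F - out_arcs F s \<subset> F" by (force simp: out_arcs_def)
          then have "card (F - out_arcs F s) < card F"
            using F(1) by (simp add: psubset_card_mono)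
          moreover have "card (out_arcs (F - out_arcs F s) u) \<le> d" for u
            using F(3) card_out_arcs_mono[OF F(1), of "F - out_arcs F s" u] le_trans by blast
          ultimately show ?thesis
            using fewer_arcs[of "F - out_arcs F s"] F \<open>finite ?T\<close> by auto
        qed
      qed
    qed simp
  qed
qed

lemma prob_gt_le_exp_moment:
  fixes M :: "'b pmf" and g :: "'b \<Rightarrow> nat" and z C :: real
  assumes z: "z > 1" and C: "0 \<le> C" and moment: "(\<integral>\<^sup>+x. ennreal (z ^ g x) \<partial>M) \<le> ennreal C"
  shows "measure_pmf.prob M {x. L < real (g x)} \<le> C * exp (- ln z * L)"
proof -
  have "indicator {x. L < real (g x)} x \<le> ennreal (exp (- ln z * L)) * ennreal (z ^ g x)" for x
  proof (cases "L < real (g x)")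
    case True
    have "z ^ g x = exp (ln z * real (g x))"
      using z by (simp add: powr_realpow[symmetric] powr_def mult.commute)
    then have "exp (- ln z * L) * z ^ g x = exp (ln z * (real (g x) - L))"
      by (simp add: exp_diff exp_minus field_simps)
    also have "\<dots> \<ge> 1" using z True by simp
    finally have "ennreal 1 \<le> ennreal (exp (- ln z * L) * z ^ g x)" by (rule ennreal_leI)
    then show ?thesis using True z by (simp add: ennreal_mult)
  qed simp
  then have "emeasure M {x. L < real (g x)} \<le> (\<integral>\<^sup>+x. ennreal (exp (- ln z * L)) * ennreal (z ^ g x) \<partial>M)"
    by (simp add: nn_integral_indicator[symmetric] nn_integral_mono del: nn_integral_indicator)
  also have "\<dots> = ennreal (exp (- ln z * L)) * (\<integral>\<^sup>+x. ennreal (z ^ g x) \<partial>M)"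
    by (rule nn_integral_cmult) auto
  also have "\<dots> \<le> ennreal (C * exp (- ln z * L))"
    using mult_left_mono[OF moment, of "ennreal (exp (- ln z * L))"] C by (simp add: ennreal_mult mult.commute)
  finally show ?thesis
    using C by (simp add: measure_pmf.emeasure_eq_measure)
qed

lemma prob_bind_pmf_le:
  assumes "\<And>x. measure_pmf.prob (N x) A \<le> b"
  shows "measure_pmf.prob (bind_pmf M N) A \<le> b"
proof -
  have b: "0 \<le> b" using assms[of undefined] measure_nonneg order_trans by blast
  have "emeasure (measure_pmf (bind_pmf M N)) A = (\<integral>\<^sup>+x. emeasure (measure_pmf (N x)) A \<partial>M)"
    by simp
  also have "\<dots> \<le> (\<integral>\<^sup>+x. ennreal b \<partial>M)"
    using assms by (intro nn_integral_mono) (simp add: measure_pmf.emeasure_eq_measure ennreal_leI)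
  also have "\<dots> = ennreal b" by simp
  finally show ?thesis using b by (simp add: measure_pmf.emeasure_eq_measure)
qed

lemma newly_activated_count_tail:
  fixes q z c :: real
  assumes c1: "c \<ge> 1" and z1: "z > 1" and q0: "q \<ge> 0" and key: "z * (1 + q * (c - 1)) ^ d \<le> c"
    and E: "finite E" "\<forall>e\<in>E. 0 \<le> w e \<and> w e \<le> 1 \<and> w e \<le> q" "\<forall>u. card (out_arcs E u) \<le> d"
  shows "measure_pmf.prob (newly_activated_count E w \<sigma> h) {n. L < real n} \<le> c * exp (- ln z * L)"
  unfolding newly_activated_count_def
proof (rule prob_bind_pmf_le)
  fix s
  define F where "F = current_arcs E h"
  have "F \<subseteq> E" by (auto simp: F_def current_arcs_def)
  then have F: "finite F" "\<forall>e\<in>F. 0 \<le> w e \<and> w e \<le> 1 \<and> w e \<le> q" "\<forall>u. card (out_arcs F u) \<le> d"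
    using E card_out_arcs_mono[OF E(1) \<open>F \<subseteq> E\<close>] finite_subset le_trans by blast+
  have reach: "round_activated E w h s = map_pmf (\<lambda>X. (live_arcs F X)\<^sup>* `` {s}) (arc_coins F w)"
    by (simp add: round_activated_def coin_flips_def ic_activated_def live_arcs_def F_def Image_singleton)
  have "measure_pmf.prob (arc_coins F w) {X. L < real (card ((live_arcs F X)\<^sup>* `` {s} - previously_activated h))}
      \<le> measure_pmf.prob (arc_coins F w) {X. L < real (card ((live_arcs F X)\<^sup>* `` {s}))}"
  proof (rule measure_pmf.finite_measure_mono)
    have "card ((live_arcs F X)\<^sup>* `` {s} - previously_activated h) \<le> card ((live_arcs F X)\<^sup>* `` {s})" for X
      using F(1) by (intro card_mono) (auto simp: live_arcs_def)
    then show "{X. L < real (card ((live_arcs F X)\<^sup>* `` {s} - previously_activated h))}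
        \<subseteq> {X. L < real (card ((live_arcs F X)\<^sup>* `` {s}))}"
      by (smt (verit) mem_Collect_eq of_nat_mono subsetI)
  qed simp
  also have "\<dots> \<le> c * exp (- ln z * L)"
    using reach_moment_bound[OF c1 _ q0 key F, of "{s}"] z1 c1
    by (intro prob_gt_le_exp_moment) auto
  finally show "measure_pmf.prob (map_pmf (\<lambda>A. card (A - previously_activated h)) (round_activated E w h s))
      {n. L < real n} \<le> c * exp (- ln z * L)"
    by (simp add: reach vimage_def)
qed

lemma le_p_max: "finite E \<Longrightarrow> e \<in> E \<Longrightarrow> w e \<le> p_max E w"
  unfolding p_max_def by (intro Max_ge) auto

lemma card_out_arcs_le_d_max:
  assumes "finite V" "E \<subseteq> V \<times> V"
  shows "card (out_arcs E u) \<le> d_max V E"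
proof (cases "u \<in> V")
  case True
  then show ?thesis
    using assms(1) unfolding d_max_def card_out_arcs by (intro Max_ge) auto
next
  case False
  then have "out_arcs E u = {}" using assms(2) by (auto simp: out_arcs_def)
  then show ?thesis by simp
qed

lemma exists_moment_constants:
  fixes q :: real
  assumes q: "q \<ge> 0" and subcritical: "q * real d < 1"
  shows "\<exists>z c. z > 1 \<and> c \<ge> 1 \<and> z * (1 + q * (c - 1)) ^ d \<le> c"
proof -
  define x where "x = q * real d"
  define \<epsilon> where "\<epsilon> = (1 - x) / 2"
  have x: "0 \<le> x" "x < 1" using q subcritical by (auto simp: x_def)
  then have \<epsilon>: "0 < \<epsilon>" "\<epsilon> \<le> 1/2" by (auto simp: \<epsilon>_def)
  have "(1 + q * \<epsilon>) ^ d \<le> exp (q * \<epsilon>) ^ d"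
    using q \<epsilon> by (intro power_mono) (auto simp: add.commute exp_ge_add_one_self)
  also have "\<dots> = exp (x * \<epsilon>)" by (simp add: x_def exp_of_nat_mult[symmetric] mult_ac)
  also have "\<dots> \<le> 1 + x * \<epsilon> + (x * \<epsilon>)\<^sup>2"
    using x \<epsilon> by (intro exp_bound) (auto intro: mult_le_one)
  also have "\<dots> < 1 + \<epsilon>"
  proof -
    have "x\<^sup>2 \<le> 1" using x by (simp add: power_le_one)
    then have "x\<^sup>2 * (1 - x) < 2 * (1 - x)" using x by (intro mult_strict_right_mono) auto
    then have "x\<^sup>2 * \<epsilon> < 1 - x" by (simp add: \<epsilon>_def)
    then have "(x + x\<^sup>2 * \<epsilon>) * \<epsilon> < 1 * \<epsilon>" using \<epsilon> by (intro mult_strict_right_mono) auto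
    then show ?thesis by (simp add: power2_eq_square algebra_simps)
  qed
  finally have "(1 + q * \<epsilon>) ^ d < 1 + \<epsilon>" .
  moreover have "(1 + q * \<epsilon>) ^ d > 0" using q \<epsilon> by (simp add: add_pos_nonneg)
  ultimately show ?thesis
    using \<epsilon> by (intro exI[of _ "(1 + \<epsilon>) / (1 + q * \<epsilon>) ^ d"] exI[of _ "1 + \<epsilon>"]) auto
qed

theorem lemma3:
  fixes p :: real and d :: nat
  assumes "p * real d < 1"
  shows "\<exists>R \<rho>. R > 0 \<and> \<rho> > 0 \<and>
    (\<forall>(V :: 'a set) E w. finite V \<longrightarrow> E \<subseteq> V \<times> V \<longrightarrow> (\<forall>e\<in>E. 0 \<le> w e \<and> w e \<le> 1) \<longrightarrow>
       p_max E w = p \<longrightarrow> d_max V E = d \<longrightarrow>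
       (\<forall>L > 0. \<forall>\<sigma> h. (\<forall>h'. set_pmf (\<sigma> h') \<subseteq> V) \<longrightarrow>
          measure_pmf.prob (newly_activated_count E w \<sigma> h) {n. real n > L}
            \<le> R * exp (- \<rho> * L)))"
proof -
  have "max 0 p * real d < 1" using assms by (simp add: max_def)
  then obtain z c where z: "z > 1" and c: "c \<ge> 1" and key: "z * (1 + max 0 p * (c - 1)) ^ d \<le> c"
    using exists_moment_constants[of "max 0 p" d] by auto
  show ?thesis
  proof (rule exI[of _ c], rule exI[of _ "ln z"], intro conjI allI impI)
    fix V :: "'a set" and E and w :: "'a \<times> 'a \<Rightarrow> real" and L :: real
      and \<sigma> :: "'a history \<Rightarrow> 'a pmf" and h
    assume V: "finite V" and EV: "E \<subseteq> V \<times> V" and w: "\<forall>e\<in>E. 0 \<le> w e \<and> w e \<le> 1"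
      and "p_max E w = p" "d_max V E = d" and "L > 0" and "\<forall>h'. set_pmf (\<sigma> h') \<subseteq> V"
    moreover have E: "finite E" using V EV finite_subset by blast
    ultimately have "\<forall>e\<in>E. 0 \<le> w e \<and> w e \<le> 1 \<and> w e \<le> max 0 p" "\<forall>u. card (out_arcs E u) \<le> d"
      using le_p_max[OF E] card_out_arcs_le_d_max[OF V EV] by (auto simp: le_max_iff_disj)
    from newly_activated_count_tail[OF c z _ key E this]
    show "measure_pmf.prob (newly_activated_count E w \<sigma> h) {n. real n > L} \<le> c * exp (- ln z * L)"
      by simp
  qed (use c z in auto)
qed

end
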